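(* Let $d\ge2$, $\omega:=\frac1{\sqrt d}\sum_{i=1}^de_i\otimes e_i\in\mathbb C^d\otimes\mathbb C^d$, $P_\omega:=\omega\omega^\ast$. Fix $\alpha\in[1,d]$, $k:=\lfloor\alpha\rfloor$, $\theta:=\alpha-k\in[0,1)$. Then $$\mu_\alpha(P_\omega)=\max_{\psi\in\mathcal V_\alpha}\langle\psi,P_\omega\psi\rangle=\frac{(k+\theta)^2}{d(k+\theta^2)}.$$ Moreover the maximum is attained by some $\psi\in\mathcal V_\alpha$ with Schmidt coefficients $s_1=\dots=s_k=\frac1{\sqrt{k+\theta^2}}$, $s_{k+1}=\frac\theta{\sqrt{k+\theta^2}}$ (which is $0$ when $\theta=0$), $s_j=0$ for $j\ge k+2$; when $\alpha=d$ one may take $\psi=\omega$.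
   Context: Schmidt coefficients $s_1(\psi)\ge\dots\ge s_d(\psi)\ge0$ of $\psi=\sum a_{ij}e_i\otimes e_j$ are the singular values of $[a_{ij}]$. For $\alpha\in[1,d]$ with $k=\lfloor\alpha\rfloor$, $\theta=\alpha-k$, $r=\lceil\alpha\rceil$, a unit vector $\psi$ is $\alpha$-admissible if $s_j(\psi)=0$ for $j\ge r+1$ and, when $\theta>0$, $s_{k+1}(\psi)\le\frac\theta k\sum_{j=1}^ks_j(\psi)$; $\mathcal V_\alpha$ is the set of these. For Hermitian $W$, $\mu_\alpha(W):=\max\{\langle\psi,W\psi\rangle:\psi\in\mathcal V_\alpha\}$. *)

theory Defs
  imports "Jordan_Normal_Form.Schur_Decomposition" "HOL-Computational_Algebra.Polynomial"
begin

text \<open>A vector psi = sum a_ij e_i (x) e_j in C^d (x) C^d is represented by its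
  coefficient matrix [a_ij], a complex d x d matrix (indices 0..d-1).
  Operators W on C^d (x) C^d are given by their matrix entries W (i,j) (i',j').\<close>

definition sing_vals :: "complex mat \<Rightarrow> real list" where
  "sing_vals A = rev (sorted_list_of_multiset
      (image_mset (\<lambda>z. sqrt (Re z)) (proots (char_poly (mat_adjoint A * A)))))"

text \<open>Schmidt coefficient s_j(psi), 1-based index j (value 0 outside 1..length).\<close>
definition schmidt :: "complex mat \<Rightarrow> nat \<Rightarrow> real" where
  "schmidt psi j = (if 1 \<le> j \<and> j \<le> length (sing_vals psi) then sing_vals psi ! (j - 1) else 0)"

definition tensor_idx :: "nat \<Rightarrow> (nat \<times> nat) set" where
  "tensor_idx d = {..<d} \<times> {..<d}"

definition unit_vec :: "nat \<Rightarrow> complex mat \<Rightarrow> bool" where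
  "unit_vec d psi \<longleftrightarrow> psi \<in> carrier_mat d d \<and> (\<Sum>p\<in>tensor_idx d. (cmod (psi $$ p))\<^sup>2) = 1"

definition qform :: "nat \<Rightarrow> (nat \<times> nat \<Rightarrow> nat \<times> nat \<Rightarrow> complex) \<Rightarrow> complex mat \<Rightarrow> complex" where
  "qform d W psi = (\<Sum>p\<in>tensor_idx d. \<Sum>q\<in>tensor_idx d. cnj (psi $$ p) * W p q * psi $$ q)"

definition admissible :: "nat \<Rightarrow> real \<Rightarrow> complex mat \<Rightarrow> bool" where
  "admissible d \<alpha> psi \<longleftrightarrow>
     (let k = nat \<lfloor>\<alpha>\<rfloor>; \<theta> = \<alpha> - real k; r = nat \<lceil>\<alpha>\<rceil> in
       (\<forall>j. r + 1 \<le> j \<and> j \<le> d \<longrightarrow> schmidt psi j = 0) \<and>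
       (\<theta> > 0 \<longrightarrow> schmidt psi (k + 1) \<le> \<theta> / real k * (\<Sum>j=1..k. schmidt psi j)))"

definition V_alpha :: "nat \<Rightarrow> real \<Rightarrow> complex mat set" where
  "V_alpha d \<alpha> = {psi. unit_vec d psi \<and> admissible d \<alpha> psi}"

definition mu_alpha :: "nat \<Rightarrow> real \<Rightarrow> (nat \<times> nat \<Rightarrow> nat \<times> nat \<Rightarrow> complex) \<Rightarrow> real" where
  "mu_alpha d \<alpha> W = Sup ((\<lambda>psi. Re (qform d W psi)) ` V_alpha d \<alpha>)"

definition omega :: "nat \<Rightarrow> complex mat" where
  "omega d = mat d d (\<lambda>(i, j). if i = j then complex_of_real (1 / sqrt (real d)) else 0)"

definition P_omega :: "nat \<Rightarrow> nat \<times> nat \<Rightarrow> nat \<times> nat \<Rightarrow> complex" where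
  "P_omega d p q = omega d $$ p * cnj (omega d $$ q)"

end

theory Submission
  imports Defs "HOL-Analysis.L2_Norm"
begin

text \<open>Since omega is maximally entangled, <psi, P_omega psi> = |tr psi|^2 / d, and |tr psi| is at
  most the sum of the singular values of the coefficient matrix psi. For an alpha-admissible unit
  vector put S = s_1 + ... + s_k and t = s_(k+1); then s_1^2 + ... + s_k^2 + t^2 = 1,
  S^2 <= k (s_1^2 + ... + s_k^2) and k t <= theta S, and these constraints force
  (S + t)^2 <= (k + theta)^2 / (k + theta^2). Equality holds for the diagonal vector with Schmidt
  coefficients (1, ..., 1, theta, 0, ..., 0) / sqrt (k + theta^2).

  The bound on the trace comes from a unitary U triangularising psi^* psi: the singular values of
  psi are then the column norms of psi U, and tr psi is the sum of the inner products of the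
  columns of U with those of psi U.\<close>

section \<open>Gram-Schmidt orthonormalisation\<close>

text \<open>A vector of \<open>\<complex>\<^sup>n\<close> is a function \<open>nat \<Rightarrow> complex\<close> of which only the coordinates
  below \<open>n\<close> matter, and a family of such vectors is a function \<open>nat \<Rightarrow> nat \<Rightarrow> complex\<close>.\<close>

definition cinner :: "nat \<Rightarrow> (nat \<Rightarrow> complex) \<Rightarrow> (nat \<Rightarrow> complex) \<Rightarrow> complex" where
  "cinner n u v = (\<Sum>x<n. cnj (u x) * v x)"

definition in_span :: "nat \<Rightarrow> (nat \<Rightarrow> nat \<Rightarrow> complex) \<Rightarrow> nat \<Rightarrow> (nat \<Rightarrow> complex) \<Rightarrow> bool" where
  "in_span n q m v \<longleftrightarrow> (\<exists>c. \<forall>x<n. v x = (\<Sum>i<m. c i * q i x))"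

definition orthonormal :: "nat \<Rightarrow> (nat \<Rightarrow> nat \<Rightarrow> complex) \<Rightarrow> nat \<Rightarrow> bool" where
  "orthonormal n q m \<longleftrightarrow> (\<forall>i<m. \<forall>l<m. cinner n (q l) (q i) = (if l = i then 1 else 0))"

lemma cinner_commute: "cinner n v u = cnj (cinner n u v)"
  unfolding cinner_def by (simp add: mult.commute)

lemma cinner_self: "cinner n u u = complex_of_real (\<Sum>x<n. (cmod (u x))\<^sup>2)"
  unfolding cinner_def of_real_sum
  by (rule sum.cong) (simp_all add: complex_norm_square mult.commute del: of_real_power)

lemma cinner_cong: "(\<And>x. x < n \<Longrightarrow> v x = v' x) \<Longrightarrow> cinner n u v = cinner n u v'"
  unfolding cinner_def by simp

lemma cinner_lincomb_right:
  "cinner n w (\<lambda>x. \<Sum>i\<in>I. c i * q i x) = (\<Sum>i\<in>I. c i * cinner n w (q i))"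
proof -
  have "cinner n w (\<lambda>x. \<Sum>i\<in>I. c i * q i x) = (\<Sum>x<n. \<Sum>i\<in>I. c i * (cnj (w x) * q i x))"
    unfolding cinner_def sum_distrib_left by (simp add: mult.left_commute)
  also have "\<dots> = (\<Sum>i\<in>I. c i * cinner n w (q i))"
    unfolding cinner_def sum_distrib_left by (rule sum.swap)
  finally show ?thesis .
qed

lemma in_span_mono: "in_span n q m v \<Longrightarrow> m \<le> m' \<Longrightarrow> in_span n q m' v"
proof -
  assume "in_span n q m v" and "m \<le> m'"
  then obtain c where c: "\<forall>x<n. v x = (\<Sum>i<m. c i * q i x)" unfolding in_span_def by blast
  have "(\<Sum>i<m'. (if i < m then c i else 0) * q i x) = (\<Sum>i<m. c i * q i x)" for x
    using \<open>m \<le> m'\<close> by (intro sum.mono_neutral_cong_right) auto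
  with c show ?thesis unfolding in_span_def by (intro exI[of _ "\<lambda>i. if i < m then c i else 0"]) simp
qed

lemma in_span_member:
  assumes "i < m"
  shows "in_span n q m (q i)"
proof -
  have "{..<m} \<inter> {l. l = i} = {i}" using assms by auto
  then show ?thesis unfolding in_span_def by (intro exI[of _ "\<lambda>l. of_bool (l = i)"]) simp
qed

lemma in_span_cong:
  assumes "in_span n q m u" "\<And>x. x < n \<Longrightarrow> v x = u x"
  shows "in_span n q m v"
  using assms unfolding in_span_def by simp

lemma in_span_cong_family:
  assumes "in_span n q m v" "\<And>i x. i < m \<Longrightarrow> x < n \<Longrightarrow> q' i x = q i x"
  shows "in_span n q' m v"
  using assms unfolding in_span_def by simp

lemma in_span_lincomb:
  assumes "\<And>i. i \<in> I \<Longrightarrow> in_span n q m (v i)"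
  shows "in_span n q m (\<lambda>x. \<Sum>i\<in>I. a i * v i x)"
proof -
  have "\<forall>i\<in>I. \<exists>c. \<forall>x<n. v i x = (\<Sum>l<m. c l * q l x)"
    using assms unfolding in_span_def by blast
  from bchoice[OF this] obtain c where c: "\<forall>i\<in>I. \<forall>x<n. v i x = (\<Sum>l<m. c i l * q l x)"
    by blast
  have "(\<Sum>i\<in>I. a i * v i x) = (\<Sum>l<m. (\<Sum>i\<in>I. a i * c i l) * q l x)" if "x < n" for x
  proof -
    have "(\<Sum>i\<in>I. a i * v i x) = (\<Sum>i\<in>I. \<Sum>l<m. a i * c i l * q l x)"
    proof (rule sum.cong[OF refl])
      fix i assume "i \<in> I"
      then show "a i * v i x = (\<Sum>l<m. a i * c i l * q l x)"
        using c that by (simp add: sum_distrib_left mult.assoc)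
    qed
    also have "\<dots> = (\<Sum>l<m. (\<Sum>i\<in>I. a i * c i l) * q l x)"
      unfolding sum_distrib_right by (rule sum.swap)
    finally show ?thesis .
  qed
  then show ?thesis unfolding in_span_def by (intro exI[of _ "\<lambda>l. \<Sum>i\<in>I. a i * c i l"]) simp
qed

lemma in_span_trans:
  assumes "\<And>i. i < m \<Longrightarrow> in_span n p k (q i)" and "in_span n q m v"
  shows "in_span n p k v"
proof -
  from assms(2) obtain c where c: "\<forall>x<n. v x = (\<Sum>i<m. c i * q i x)" unfolding in_span_def by blast
  have "in_span n p k (\<lambda>x. \<Sum>i<m. c i * q i x)"
    using assms(1) by (intro in_span_lincomb) simp
  then show ?thesis by (rule in_span_cong) (simp add: c)
qed

lemma cinner_in_span_eq_0:
  assumes "\<And>l. l < m \<Longrightarrow> cinner n w (q l) = 0" and "in_span n q m v"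
  shows "cinner n w v = 0"
proof -
  from assms(2) obtain c where "\<forall>x<n. v x = (\<Sum>i<m. c i * q i x)" unfolding in_span_def by blast
  then have "cinner n w v = cinner n w (\<lambda>x. \<Sum>i<m. c i * q i x)" by (intro cinner_cong) simp
  also have "\<dots> = 0" unfolding cinner_lincomb_right using assms(1) by simp
  finally show ?thesis .
qed

lemma not_in_span_if_left_inverse:
  assumes inv: "\<And>l j. l < n \<Longrightarrow> j < n \<Longrightarrow> (\<Sum>x<n. L l x * p j x) = (if l = j then 1 else 0)"
    and "m < n"
  shows "\<not> in_span n p m (p m)"
proof
  assume "in_span n p m (p m)"
  then obtain e where e: "\<forall>x<n. p m x = (\<Sum>l<m. e l * p l x)" unfolding in_span_def by blast
  have "1 = (\<Sum>x<n. L m x * p m x)" using inv[OF \<open>m < n\<close> \<open>m < n\<close>] by simp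
  also have "\<dots> = (\<Sum>l<m. e l * (\<Sum>x<n. L m x * p l x))"
    using e by (simp add: sum_distrib_left sum.swap[of _ "{..<m}"] mult.left_commute)
  also have "\<dots> = 0" using inv \<open>m < n\<close> by (intro sum.neutral) auto
  finally show False by simp
qed

lemma orthonormal_extend:
  assumes "orthonormal n q m" "\<And>l. l < m \<Longrightarrow> cinner n (q l) w = 0" "cinner n w w = 1"
  shows "orthonormal n (q(m := w)) (Suc m)"
  using assms cinner_commute[of n w "q _"] unfolding orthonormal_def
  by (auto simp: less_Suc_eq)

lemma cinner_residual_eq_0:
  assumes "orthonormal n q m" "l < m"
  shows "cinner n (q l) (\<lambda>x. v x - (\<Sum>i<m. cinner n (q i) v * q i x)) = 0"
proof -
  have "cinner n (q l) (\<lambda>x. v x - (\<Sum>i<m. cinner n (q i) v * q i x))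
      = cinner n (q l) v - cinner n (q l) (\<lambda>x. \<Sum>i<m. cinner n (q i) v * q i x)"
    unfolding cinner_def by (simp add: right_diff_distrib sum_subtractf)
  also have "cinner n (q l) (\<lambda>x. \<Sum>i<m. cinner n (q i) v * q i x)
      = (\<Sum>i<m. if i = l then cinner n (q i) v else 0)"
    unfolding cinner_lincomb_right using assms by (rule_tac sum.cong) (auto simp: orthonormal_def)
  finally show ?thesis using assms(2) by simp
qed

lemma cinner_normalize:
  assumes "x0 < n" "u x0 \<noteq> 0"
  defines "N \<equiv> sqrt (\<Sum>x<n. (cmod (u x))\<^sup>2)"
  shows "N > 0" and "cinner n (\<lambda>x. u x / complex_of_real N) (\<lambda>x. u x / complex_of_real N) = 1"
proof -
  have "0 < (cmod (u x0))\<^sup>2" using \<open>u x0 \<noteq> 0\<close> by simp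
  also have "(cmod (u x0))\<^sup>2 \<le> (\<Sum>x<n. (cmod (u x))\<^sup>2)"
    using \<open>x0 < n\<close> by (intro member_le_sum) auto
  finally show "N > 0" unfolding N_def by simp
  have "cinner n (\<lambda>x. u x / complex_of_real N) (\<lambda>x. u x / complex_of_real N)
      = cinner n u u / (complex_of_real N)\<^sup>2"
    unfolding cinner_def by (simp add: sum_divide_distrib power2_eq_square)
  also have "\<dots> = complex_of_real (N\<^sup>2) / (complex_of_real N)\<^sup>2"
    unfolding cinner_self N_def by (simp add: sum_nonneg)
  also have "\<dots> = 1"
    using \<open>N > 0\<close> by simp
  finally show "cinner n (\<lambda>x. u x / complex_of_real N) (\<lambda>x. u x / complex_of_real N) = 1" .
qed

lemma in_span_scaled_residual:
  assumes "\<And>i. i < m \<Longrightarrow> in_span n p (Suc i) (q i)"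
  shows "in_span n p (Suc m) (\<lambda>x. (p m x - (\<Sum>i<m. c i * q i x)) / a)"
proof -
  define r where "r i = (if i = m then p m else q i)" for i
  define b where "b i = (if i = m then 1 else - c i) / a" for i
  have "in_span n p (Suc m) (r i)" if "i \<in> {..<Suc m}" for i
  proof (cases "i = m")
    case True
    then show ?thesis by (simp add: r_def in_span_member)
  next
    case False
    with that have "i < m" by simp
    then have "in_span n p (Suc m) (q i)" using assms by (rule_tac in_span_mono) auto
    then show ?thesis unfolding r_def using False by simp
  qed
  then have "in_span n p (Suc m) (\<lambda>x. \<Sum>i<Suc m. b i * r i x)"
    by (rule in_span_lincomb)
  have tail: "(\<Sum>i<m. b i * r i x) = (\<Sum>i<m. - (c i * q i x) / a)" for x
    by (rule sum.cong) (auto simp: b_def r_def)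
  from \<open>in_span n p (Suc m) (\<lambda>x. \<Sum>i<Suc m. b i * r i x)\<close> show ?thesis
    by (rule in_span_cong) (simp add: tail b_def r_def diff_divide_distrib sum_divide_distrib sum_negf)
qed

lemma residual_nonzero:
  assumes inv: "\<And>l j. l < n \<Longrightarrow> j < n \<Longrightarrow> (\<Sum>x<n. L l x * p j x) = (if l = j then 1 else 0)"
    and "m < n" and span_q: "\<And>j. j < m \<Longrightarrow> in_span n p (Suc j) (q j)"
  shows "\<exists>x<n. p m x - (\<Sum>i<m. c i * q i x) \<noteq> 0"
proof (rule ccontr)
  assume "\<not> (\<exists>x<n. p m x - (\<Sum>i<m. c i * q i x) \<noteq> 0)"
  then have "in_span n q m (p m)" unfolding in_span_def by (intro exI[of _ c]) simp
  moreover have "in_span n p m (q i)" if "i < m" for i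
    using span_q[OF that] by (rule in_span_mono) (use that in simp)
  ultimately have "in_span n p m (p m)" by (rule in_span_trans[rotated])
  with not_in_span_if_left_inverse[OF inv \<open>m < n\<close>] show False by contradiction
qed

lemma gram_schmidt_step:
  assumes inv: "\<And>l j. l < n \<Longrightarrow> j < n \<Longrightarrow> (\<Sum>x<n. L l x * p j x) = (if l = j then 1 else 0)"
    and "m < n" and orth: "orthonormal n q m"
    and span_q: "\<And>j. j < m \<Longrightarrow> in_span n p (Suc j) (q j)"
  shows "\<exists>w. orthonormal n (q(m := w)) (Suc m) \<and> in_span n (q(m := w)) (Suc m) (p m)
    \<and> in_span n p (Suc m) w"
proof -
  define c where "c i = cinner n (q i) (p m)" for i
  define u where "u x = p m x - (\<Sum>i<m. c i * q i x)" for x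
  have "\<exists>x<n. u x \<noteq> 0"
    unfolding u_def using inv \<open>m < n\<close> span_q by (rule residual_nonzero)
  then obtain x0 where "x0 < n" "u x0 \<noteq> 0" by blast
  define N where "N = sqrt (\<Sum>x<n. (cmod (u x))\<^sup>2)"
  define w where "w x = u x / complex_of_real N" for x
  note N = cinner_normalize[where u = u, OF \<open>x0 < n\<close> \<open>u x0 \<noteq> 0\<close>, folded N_def w_def]
  have w_orth: "cinner n (q l) w = 0" if "l < m" for l
    using cinner_residual_eq_0[OF orth that, of "p m"]
    unfolding cinner_def w_def u_def c_def by (simp add: sum_divide_distrib[symmetric])
  have "orthonormal n (q(m := w)) (Suc m)"
    using orth w_orth N(2) by (rule orthonormal_extend)
  moreover have "in_span n (q(m := w)) (Suc m) (p m)"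
  proof -
    have "(\<Sum>i<m. (c(m := complex_of_real N)) i * (q(m := w)) i x) = (\<Sum>i<m. c i * q i x)" for x
      by (rule sum.cong) auto
    then show ?thesis
      unfolding in_span_def using N(1)
      by (intro exI[of _ "c(m := complex_of_real N)"]) (simp add: w_def u_def)
  qed
  moreover have "in_span n p (Suc m) w"
    unfolding w_def u_def using span_q by (rule in_span_scaled_residual)
  ultimately show ?thesis by blast
qed

lemma gram_schmidt:
  assumes inv: "\<And>l j. l < n \<Longrightarrow> j < n \<Longrightarrow> (\<Sum>x<n. L l x * p j x) = (if l = j then 1 else 0)"
  shows "m \<le> n \<Longrightarrow> \<exists>q. orthonormal n q m
    \<and> (\<forall>j<m. in_span n q (Suc j) (p j) \<and> in_span n p (Suc j) (q j))"
proof (induction m)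
  case 0
  show ?case by (simp add: orthonormal_def)
next
  case (Suc m)
  then obtain q where orth: "orthonormal n q m"
    and span: "\<forall>j<m. in_span n q (Suc j) (p j) \<and> in_span n p (Suc j) (q j)" by auto
  with gram_schmidt_step[OF inv, of m q] Suc.prems obtain w
    where "orthonormal n (q(m := w)) (Suc m)" "in_span n (q(m := w)) (Suc m) (p m)"
      "in_span n p (Suc m) w" by auto
  moreover have "in_span n (q(m := w)) (Suc j) (p j) \<and> in_span n p (Suc j) ((q(m := w)) j)"
    if "j < m" for j
  proof
    show "in_span n (q(m := w)) (Suc j) (p j)"
    proof (rule in_span_cong_family)
      show "in_span n q (Suc j) (p j)" using span that by simp
    qed (use that in auto)
    show "in_span n p (Suc j) ((q(m := w)) j)"
      using span that by simp
  qed
  ultimately show ?case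
    by (intro exI[of _ "q(m := w)"] conjI allI impI)
      (auto simp: less_Suc_eq fun_upd_same simp del: fun_upd_apply)
qed

section \<open>Unitary triangularisation\<close>

lemma mat_adjoint_dim [simp]:
  "dim_row (mat_adjoint A) = dim_col A" "dim_col (mat_adjoint A) = dim_row A"
  unfolding mat_adjoint_def by (simp_all add: mat_of_rows_def)

lemma mat_adjoint_index [simp]:
  "i < dim_col A \<Longrightarrow> j < dim_row A \<Longrightarrow> mat_adjoint A $$ (i, j) = cnj (A $$ (j, i))"
  unfolding mat_adjoint_def by (simp add: mat_of_rows_def)

lemma mat_adjoint_carrier [simp]: "A \<in> carrier_mat n m \<Longrightarrow> mat_adjoint A \<in> carrier_mat m n"
  by auto

lemma index_mult_mat_sum:
  assumes "A \<in> carrier_mat m n" "B \<in> carrier_mat n l" "i < m" "j < l"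
  shows "(A * B) $$ (i, j) = (\<Sum>k<n. A $$ (i, k) * B $$ (k, j))"
  using assms by (auto simp: scalar_prod_def lessThan_atLeast0 intro!: sum.cong)

lemma in_span_mat_mult:
  assumes "\<And>i. i < m \<Longrightarrow> in_span n p k (\<lambda>y. \<Sum>x<n. M $$ (y, x) * q i x)"
    and "in_span n q m v"
  shows "in_span n p k (\<lambda>y. \<Sum>x<n. M $$ (y, x) * v x)"
proof -
  from assms(2) obtain c where c: "\<forall>x<n. v x = (\<Sum>i<m. c i * q i x)" unfolding in_span_def by blast
  have "in_span n p k (\<lambda>y. \<Sum>i<m. c i * (\<Sum>x<n. M $$ (y, x) * q i x))"
    using assms(1) by (rule_tac in_span_lincomb) simp
  moreover have "(\<Sum>x<n. M $$ (y, x) * v x) = (\<Sum>i<m. c i * (\<Sum>x<n. M $$ (y, x) * q i x))" for y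
  proof -
    have "(\<Sum>x<n. M $$ (y, x) * v x) = (\<Sum>x<n. \<Sum>i<m. c i * (M $$ (y, x) * q i x))"
      using c by (simp add: sum_distrib_left mult.left_commute)
    also have "\<dots> = (\<Sum>i<m. c i * (\<Sum>x<n. M $$ (y, x) * q i x))"
      unfolding sum_distrib_left by (rule sum.swap)
    finally show ?thesis .
  qed
  ultimately show ?thesis by (rule in_span_cong)
qed

lemma similar_upper_triangular_in_span:
  assumes M: "M \<in> carrier_mat n n" and P: "P \<in> carrier_mat n n" and B: "B \<in> carrier_mat n n"
    and MP: "M * P = P * B" and ut: "upper_triangular B" and "j < n"
  shows "in_span n (\<lambda>j x. P $$ (x, j)) (Suc j) (\<lambda>y. \<Sum>x<n. M $$ (y, x) * P $$ (x, j))"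
proof -
  have "(\<Sum>x<n. M $$ (y, x) * P $$ (x, j)) = (\<Sum>t<Suc j. B $$ (t, j) * P $$ (y, t))" if "y < n" for y
  proof -
    have "(\<Sum>x<n. M $$ (y, x) * P $$ (x, j)) = (P * B) $$ (y, j)"
      unfolding MP[symmetric] using index_mult_mat_sum[OF M P that \<open>j < n\<close>] by simp
    also have "\<dots> = (\<Sum>t<n. P $$ (y, t) * B $$ (t, j))"
      by (rule index_mult_mat_sum[OF P B that \<open>j < n\<close>])
    also have "\<dots> = (\<Sum>t<Suc j. P $$ (y, t) * B $$ (t, j))"
      using ut B \<open>j < n\<close> by (intro sum.mono_neutral_right) (auto simp: upper_triangular_def)
    finally show ?thesis by (simp add: mult.commute)
  qed
  then show ?thesis unfolding in_span_def by (intro exI[of _ "\<lambda>t. B $$ (t, j)"]) simp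
qed

lemma upper_triangular_if_invariant_flag:
  assumes M: "M \<in> carrier_mat n n" and orth: "orthonormal n q n"
    and flag: "\<And>j. j < n \<Longrightarrow> in_span n q (Suc j) (\<lambda>y. \<Sum>x<n. M $$ (y, x) * q j x)"
  defines "U \<equiv> mat n n (\<lambda>(x, j). q j x)"
  shows "upper_triangular (mat_adjoint U * M * U)"
proof (rule upper_triangularI)
  have U: "U \<in> carrier_mat n n" unfolding U_def by simp
  fix i j assume "j < i" and "i < dim_row (mat_adjoint U * M * U)"
  then have "i < n" "j < n" using U by auto
  have "(mat_adjoint U * M * U) $$ (i, j) = (mat_adjoint U * (M * U)) $$ (i, j)"
    using U M by (simp add: assoc_mult_mat[of _ n n _ n _ n])
  also have "\<dots> = (\<Sum>y<n. mat_adjoint U $$ (i, y) * (M * U) $$ (y, j))"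
    using U M \<open>i < n\<close> \<open>j < n\<close> by (rule_tac index_mult_mat_sum) auto
  also have "\<dots> = (\<Sum>y<n. cnj (q i y) * (\<Sum>x<n. M $$ (y, x) * U $$ (x, j)))"
  proof (rule sum.cong[OF refl])
    fix y assume "y \<in> {..<n}"
    then show "mat_adjoint U $$ (i, y) * (M * U) $$ (y, j) = cnj (q i y) * (\<Sum>x<n. M $$ (y, x) * U $$ (x, j))"
      using index_mult_mat_sum[OF M U _ \<open>j < n\<close>, of y] \<open>i < n\<close> by (simp add: U_def)
  qed
  also have "\<dots> = cinner n (q i) (\<lambda>y. \<Sum>x<n. M $$ (y, x) * q j x)"
    unfolding cinner_def using \<open>j < n\<close> by (simp add: U_def)
  also have "\<dots> = 0"
  proof (rule cinner_in_span_eq_0[OF _ flag[OF \<open>j < n\<close>]])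
    fix l assume "l < Suc j"
    then show "cinner n (q i) (q l) = 0"
      using orth \<open>j < i\<close> \<open>i < n\<close> unfolding orthonormal_def by auto
  qed
  finally show "(mat_adjoint U * M * U) $$ (i, j) = 0" .
qed

lemma schur_similarity:
  fixes M :: "complex mat"
  assumes M: "M \<in> carrier_mat n n"
  obtains B P Q where "B \<in> carrier_mat n n" "P \<in> carrier_mat n n" "Q \<in> carrier_mat n n"
    "Q * P = 1\<^sub>m n" "M * P = P * B" "upper_triangular B"
proof -
  obtain es where es: "char_poly M = (\<Prod>a\<leftarrow>es. [:- a, 1:])"
    using char_poly_factorized[OF M] by auto
  obtain B P Q where "schur_decomposition M es = (B, P, Q)"
    by (cases "schur_decomposition M es") auto
  from schur_decomposition[OF M es this]
  have wit: "similar_mat_wit M B P Q" and ut: "upper_triangular B" by auto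
  from wit M have B: "B \<in> carrier_mat n n" and P: "P \<in> carrier_mat n n" and Q: "Q \<in> carrier_mat n n"
    and QP: "Q * P = 1\<^sub>m n" and MPBQ: "M = P * B * Q"
    unfolding similar_mat_wit_def Let_def by auto
  have "M * P = (P * B) * (Q * P)" using MPBQ P B Q by (simp add: assoc_mult_mat[of _ n n _ n _ n])
  then have "M * P = P * B" using QP P B by simp
  with B P Q QP ut that show ?thesis by blast
qed

lemma adjoint_mult_self_eq_one_if_orthonormal:
  assumes "orthonormal n q n"
  defines "U \<equiv> mat n n (\<lambda>(x, j). q j x)"
  shows "mat_adjoint U * U = 1\<^sub>m n"
proof (rule eq_matI)
  have U: "U \<in> carrier_mat n n" unfolding U_def by simp
  fix i j assume "i < dim_row (1\<^sub>m n :: complex mat)" "j < dim_col (1\<^sub>m n :: complex mat)"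
  then have "i < n" "j < n" by auto
  then have "(mat_adjoint U * U) $$ (i, j) = (\<Sum>x<n. mat_adjoint U $$ (i, x) * U $$ (x, j))"
    using U by (rule_tac index_mult_mat_sum) auto
  also have "\<dots> = cinner n (q i) (q j)"
    unfolding cinner_def using \<open>i < n\<close> \<open>j < n\<close> by (simp add: U_def)
  finally show "(mat_adjoint U * U) $$ (i, j) = 1\<^sub>m n $$ (i, j)"
    using assms \<open>i < n\<close> \<open>j < n\<close> unfolding orthonormal_def by simp
qed (simp_all add: U_def)

text \<open>The Schur decomposition of Jordan_Normal_Form is only a similarity. Orthonormalising the
  columns of its transformation matrix keeps the flag of invariant subspaces, so the resulting
  unitary matrix still triangularises.\<close>

lemma unitary_triangularization:
  fixes M :: "complex mat"
  assumes M: "M \<in> carrier_mat n n"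
  shows "\<exists>U \<in> carrier_mat n n. mat_adjoint U * U = 1\<^sub>m n \<and> upper_triangular (mat_adjoint U * M * U)"
proof -
  obtain B P Q where B: "B \<in> carrier_mat n n" and P: "P \<in> carrier_mat n n" and Q: "Q \<in> carrier_mat n n"
    and QP: "Q * P = 1\<^sub>m n" and MP: "M * P = P * B" and ut: "upper_triangular B"
    using schur_similarity[OF M] by blast
  define p where "p j x = P $$ (x, j)" for j x
  have "(\<Sum>x<n. Q $$ (l, x) * p j x) = (if l = j then 1 else 0)" if "l < n" "j < n" for l j
    using index_mult_mat_sum[OF Q P that] QP that by (simp add: p_def)
  from gram_schmidt[of n "\<lambda>l x. Q $$ (l, x)" p, OF this order_refl]
  obtain q where orth: "orthonormal n q n"
    and span: "\<And>j. j < n \<Longrightarrow> in_span n q (Suc j) (p j) \<and> in_span n p (Suc j) (q j)"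
    by blast
  have "in_span n q (Suc j) (\<lambda>y. \<Sum>x<n. M $$ (y, x) * q j x)" if "j < n" for j
  proof (rule in_span_mat_mult)
    show "in_span n p (Suc j) (q j)" using span that by blast
    fix i assume "i < Suc j"
    have "in_span n q (Suc j) (p l)" if "l < Suc i" for l
      using span[of l] that \<open>i < Suc j\<close> \<open>j < n\<close> by (auto elim: in_span_mono)
    then show "in_span n q (Suc j) (\<lambda>y. \<Sum>x<n. M $$ (y, x) * p i x)"
      using similar_upper_triangular_in_span[OF M P B MP ut, of i] \<open>i < Suc j\<close> \<open>j < n\<close>
      unfolding p_def by (rule_tac in_span_trans) auto
  qed
  then have "upper_triangular (mat_adjoint (mat n n (\<lambda>(x, j). q j x)) * M * mat n n (\<lambda>(x, j). q j x))"
    using M orth by (rule_tac upper_triangular_if_invariant_flag) auto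
  moreover have "mat n n (\<lambda>(x, j). q j x) \<in> carrier_mat n n" by simp
  ultimately show ?thesis using adjoint_mult_self_eq_one_if_orthonormal[OF orth] by blast
qed

section \<open>Singular values and Schmidt coefficients\<close>

lemma mat_adjoint_mult:
  fixes A B :: "complex mat"
  assumes A: "A \<in> carrier_mat n m" and B: "B \<in> carrier_mat m l"
  shows "mat_adjoint (A * B) = mat_adjoint B * mat_adjoint A"
proof (rule eq_matI)
  fix i j assume "i < dim_row (mat_adjoint B * mat_adjoint A)" "j < dim_col (mat_adjoint B * mat_adjoint A)"
  then have "i < l" "j < n" using A B by auto
  have "mat_adjoint (A * B) $$ (i, j) = cnj ((A * B) $$ (j, i))"
    using A B \<open>i < l\<close> \<open>j < n\<close> by simp
  also have "\<dots> = (\<Sum>k<m. cnj (A $$ (j, k)) * cnj (B $$ (k, i)))"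
    by (simp add: index_mult_mat_sum[OF A B \<open>j < n\<close> \<open>i < l\<close>])
  also have "\<dots> = (mat_adjoint B * mat_adjoint A) $$ (i, j)"
    using A B \<open>i < l\<close> \<open>j < n\<close>
    by (simp add: index_mult_mat_sum[OF mat_adjoint_carrier[OF B] mat_adjoint_carrier[OF A]] mult.commute
        del: index_mult_mat)
  finally show "mat_adjoint (A * B) $$ (i, j) = (mat_adjoint B * mat_adjoint A) $$ (i, j)" .
qed (use A B in auto)

lemma cmod_sum_cnj_mult_le:
  fixes u w :: "nat \<Rightarrow> complex"
  shows "cmod (\<Sum>x<n. cnj (u x) * w x) \<le> sqrt (\<Sum>x<n. (cmod (u x))\<^sup>2) * sqrt (\<Sum>x<n. (cmod (w x))\<^sup>2)"
proof -
  have "cmod (\<Sum>x<n. cnj (u x) * w x) \<le> (\<Sum>x<n. \<bar>cmod (u x)\<bar> * \<bar>cmod (w x)\<bar>)"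
    by (rule order_trans[OF norm_sum]) (simp add: norm_mult)
  also have "\<dots> \<le> L2_set (\<lambda>x. cmod (u x)) {..<n} * L2_set (\<lambda>x. cmod (w x)) {..<n}"
    by (rule L2_set_mult_ineq)
  finally show ?thesis unfolding L2_set_def .
qed

definition col_norm :: "complex mat \<Rightarrow> nat \<Rightarrow> real" where
  "col_norm A i = sqrt (\<Sum>x<dim_row A. (cmod (A $$ (x, i)))\<^sup>2)"

lemma col_norm_nonneg: "col_norm A i \<ge> 0"
  unfolding col_norm_def by (simp add: sum_nonneg)

lemma adjoint_mult_self_diag:
  assumes "W \<in> carrier_mat m n" "i < n"
  shows "(mat_adjoint W * W) $$ (i, i) = complex_of_real ((col_norm W i)\<^sup>2)"
proof -
  have "(mat_adjoint W * W) $$ (i, i) = (\<Sum>x<m. cnj (W $$ (x, i)) * W $$ (x, i))"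
    using assms by (simp add: index_mult_mat_sum[OF mat_adjoint_carrier[OF assms(1)] assms(1)] del: index_mult_mat)
  also have "\<dots> = complex_of_real (\<Sum>x<m. (cmod (W $$ (x, i)))\<^sup>2)"
    using cinner_self[of m "\<lambda>x. W $$ (x, i)"] unfolding cinner_def .
  finally show ?thesis using assms(1) unfolding col_norm_def by (simp add: sum_nonneg)
qed

lemma mult_adjoint_self_diag:
  assumes "W \<in> carrier_mat m n" "x < m"
  shows "(W * mat_adjoint W) $$ (x, x) = complex_of_real (\<Sum>i<n. (cmod (W $$ (x, i)))\<^sup>2)"
proof -
  have "(W * mat_adjoint W) $$ (x, x) = (\<Sum>i<n. cnj (W $$ (x, i)) * W $$ (x, i))"
    using assms by (simp add: index_mult_mat_sum[OF assms(1) mat_adjoint_carrier[OF assms(1)]] mult.commute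
        del: index_mult_mat)
  also have "\<dots> = complex_of_real (\<Sum>i<n. (cmod (W $$ (x, i)))\<^sup>2)"
    using cinner_self[of n "\<lambda>i. W $$ (x, i)"] unfolding cinner_def .
  finally show ?thesis .
qed

lemma proots_linear_prod: "proots (\<Prod>a\<leftarrow>es. [:- a, 1:]) = mset (es :: complex list)"
proof (induction es)
  case (Cons e es)
  have "proots (\<Prod>a\<leftarrow>e # es. [:- a, 1:]) = proots ([:- e, 1:] * (\<Prod>a\<leftarrow>es. [:- a, 1:]))"
    by simp
  also have "\<dots> = proots [:- e, 1:] + proots (\<Prod>a\<leftarrow>es. [:- a, 1:])"
    by (rule proots_mult) (auto simp: prod_list_zero_iff)
  finally show ?case using Cons by simp
qed simp

lemma unitary_mult_adjoint:
  "U \<in> carrier_mat n n \<Longrightarrow> mat_adjoint U * U = 1\<^sub>m n \<Longrightarrow> U * mat_adjoint U = 1\<^sub>m n"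
  by (rule mat_mult_left_right_inverse[OF mat_adjoint_carrier]) auto

lemma similar_mat_unitary_conj:
  fixes H U :: "complex mat"
  assumes H: "H \<in> carrier_mat n n" and U: "U \<in> carrier_mat n n" and UU: "mat_adjoint U * U = 1\<^sub>m n"
  shows "similar_mat H (mat_adjoint U * H * U)"
proof -
  define T where "T = mat_adjoint U * H * U"
  have Ua: "mat_adjoint U \<in> carrier_mat n n" using U by simp
  have T: "T \<in> carrier_mat n n" unfolding T_def by (rule mult_carrier_mat[OF mult_carrier_mat[OF Ua H] U])
  note UU' = unitary_mult_adjoint[OF U UU]
  have "U * T * mat_adjoint U = U * (T * mat_adjoint U)"
    by (rule assoc_mult_mat[OF U T Ua])
  also have "T * mat_adjoint U = mat_adjoint U * H * (U * mat_adjoint U)"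
    unfolding T_def by (rule assoc_mult_mat[OF mult_carrier_mat[OF Ua H] U Ua])
  also have "\<dots> = mat_adjoint U * H"
    unfolding UU' by (rule right_mult_one_mat[OF mult_carrier_mat[OF Ua H]])
  also have "U * (mat_adjoint U * H) = (U * mat_adjoint U) * H"
    by (rule assoc_mult_mat[OF U Ua H, symmetric])
  also have "\<dots> = H"
    unfolding UU' by (rule left_mult_one_mat[OF H])
  finally have "H = U * T * mat_adjoint U" ..
  then have "similar_mat_wit H T U (mat_adjoint U)"
    by (rule similar_mat_witI[OF UU' UU _ H T U Ua])
  then show ?thesis unfolding similar_mat_def T_def by blast
qed

lemma mat_adjoint_mult_self_mult:
  fixes A U :: "complex mat"
  assumes A: "A \<in> carrier_mat n n" and U: "U \<in> carrier_mat n n"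
  shows "mat_adjoint (A * U) * (A * U) = mat_adjoint U * (mat_adjoint A * A) * U"
proof -
  have Ua: "mat_adjoint U \<in> carrier_mat n n" and Aa: "mat_adjoint A \<in> carrier_mat n n"
    using U A by simp_all
  have "mat_adjoint (A * U) * (A * U) = mat_adjoint U * (mat_adjoint A * (A * U))"
    unfolding mat_adjoint_mult[OF A U] by (rule assoc_mult_mat[OF Ua Aa mult_carrier_mat[OF A U]])
  also have "mat_adjoint A * (A * U) = mat_adjoint A * A * U"
    by (rule assoc_mult_mat[OF Aa A U, symmetric])
  also have "mat_adjoint U * (mat_adjoint A * A * U) = mat_adjoint U * (mat_adjoint A * A) * U"
    by (rule assoc_mult_mat[OF Ua mult_carrier_mat[OF Aa A] U, symmetric])
  finally show ?thesis .
qed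

text \<open>The eigenvalues of \<open>A\<^sup>* A\<close> are the diagonal entries of the triangular matrix
  \<open>(A U)\<^sup>* (A U)\<close>, i.e. the squared column norms of \<open>A U\<close>.\<close>

lemma mset_sing_vals_eq_col_norms:
  fixes A U :: "complex mat"
  assumes A: "A \<in> carrier_mat n n" and U: "U \<in> carrier_mat n n" and UU: "mat_adjoint U * U = 1\<^sub>m n"
    and ut: "upper_triangular (mat_adjoint U * (mat_adjoint A * A) * U)"
  shows "mset (sing_vals A) = mset (map (col_norm (A * U)) [0..<n])"
proof -
  define H where "H = mat_adjoint A * A"
  define T where "T = mat_adjoint U * H * U"
  have H: "H \<in> carrier_mat n n" unfolding H_def by (rule mult_carrier_mat[OF mat_adjoint_carrier[OF A] A])
  have T: "T \<in> carrier_mat n n"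
    unfolding T_def by (rule mult_carrier_mat[OF mult_carrier_mat[OF mat_adjoint_carrier[OF U] H] U])
  have T_diag: "T $$ (i, i) = complex_of_real ((col_norm (A * U) i)\<^sup>2)" if "i < n" for i
    using adjoint_mult_self_diag[OF mult_carrier_mat[OF A U] that]
    unfolding T_def H_def mat_adjoint_mult_self_mult[OF A U] .
  have "char_poly H = char_poly T"
    unfolding T_def by (rule char_poly_similar[OF similar_mat_unitary_conj[OF H U UU]])
  also have "\<dots> = (\<Prod>a\<leftarrow>diag_mat T. [:- a, 1:])"
    by (rule char_poly_upper_triangular[OF T]) (use ut in \<open>simp add: T_def H_def\<close>)
  finally have "proots (char_poly H) = mset (diag_mat T)" by (simp add: proots_linear_prod)
  moreover have "map (\<lambda>z. sqrt (Re z)) (diag_mat T) = map (col_norm (A * U)) [0..<n]"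
    using T by (auto simp: diag_mat_def T_diag col_norm_nonneg)
  ultimately show ?thesis
    unfolding sing_vals_def H_def by (simp flip: mset_map)
qed

lemma sum_col_norm_sq_unitary:
  fixes A U :: "complex mat"
  assumes A: "A \<in> carrier_mat n n" and U: "U \<in> carrier_mat n n" and UU: "mat_adjoint U * U = 1\<^sub>m n"
  shows "(\<Sum>i<n. (col_norm (A * U) i)\<^sup>2) = (\<Sum>x<n. \<Sum>y<n. (cmod (A $$ (x, y)))\<^sup>2)"
proof -
  define W where "W = A * U"
  have W: "W \<in> carrier_mat n n" unfolding W_def by (rule mult_carrier_mat[OF A U])
  note UU' = unitary_mult_adjoint[OF U UU]
  have Ua: "mat_adjoint U \<in> carrier_mat n n" and Aa: "mat_adjoint A \<in> carrier_mat n n"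
    using U A by simp_all
  have "W * mat_adjoint W = A * U * (mat_adjoint U * mat_adjoint A)"
    unfolding W_def mat_adjoint_mult[OF A U] ..
  also have "\<dots> = A * (U * (mat_adjoint U * mat_adjoint A))"
    by (rule assoc_mult_mat[OF A U mult_carrier_mat[OF Ua Aa]])
  also have "U * (mat_adjoint U * mat_adjoint A) = mat_adjoint A"
    unfolding assoc_mult_mat[OF U Ua Aa, symmetric] UU' by (rule left_mult_one_mat[OF Aa])
  finally have WW: "W * mat_adjoint W = A * mat_adjoint A" .
  have "(\<Sum>i<n. (col_norm W i)\<^sup>2) = (\<Sum>i<n. \<Sum>x<n. (cmod (W $$ (x, i)))\<^sup>2)"
    using W unfolding col_norm_def by (simp add: sum_nonneg)
  also have "\<dots> = (\<Sum>x<n. \<Sum>i<n. (cmod (W $$ (x, i)))\<^sup>2)"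
    by (rule sum.swap)
  also have "\<dots> = (\<Sum>x<n. \<Sum>y<n. (cmod (A $$ (x, y)))\<^sup>2)"
  proof (rule sum.cong[OF refl])
    fix x assume "x \<in> {..<n}"
    then have "complex_of_real (\<Sum>i<n. (cmod (W $$ (x, i)))\<^sup>2) = complex_of_real (\<Sum>y<n. (cmod (A $$ (x, y)))\<^sup>2)"
      using mult_adjoint_self_diag[OF W, of x] mult_adjoint_self_diag[OF A, of x] unfolding WW by simp
    then show "(\<Sum>i<n. (cmod (W $$ (x, i)))\<^sup>2) = (\<Sum>y<n. (cmod (A $$ (x, y)))\<^sup>2)"
      by (simp only: of_real_eq_iff)
  qed
  finally show ?thesis unfolding W_def .
qed

lemma cmod_trace_le_sum_col_norm:
  fixes A U :: "complex mat"
  assumes A: "A \<in> carrier_mat n n" and U: "U \<in> carrier_mat n n" and UU: "mat_adjoint U * U = 1\<^sub>m n"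
  shows "cmod (\<Sum>x<n. A $$ (x, x)) \<le> (\<Sum>i<n. col_norm (A * U) i)"
proof -
  define W where "W = A * U"
  have W: "W \<in> carrier_mat n n" unfolding W_def by (rule mult_carrier_mat[OF A U])
  note UU' = unitary_mult_adjoint[OF U UU]
  have "W * mat_adjoint U = A * (U * mat_adjoint U)"
    unfolding W_def by (rule assoc_mult_mat[OF A U mat_adjoint_carrier[OF U]])
  then have "A = W * mat_adjoint U"
    unfolding UU' using A by simp
  then have "(\<Sum>x<n. A $$ (x, x)) = (\<Sum>x<n. \<Sum>i<n. W $$ (x, i) * cnj (U $$ (x, i)))"
    using W U by (simp add: index_mult_mat_sum[OF W mat_adjoint_carrier[OF U]] del: index_mult_mat)
  also have "\<dots> = (\<Sum>i<n. cinner n (\<lambda>x. U $$ (x, i)) (\<lambda>x. W $$ (x, i)))"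
    unfolding cinner_def by (subst sum.swap) (simp add: mult.commute)
  also have "cmod \<dots> \<le> (\<Sum>i<n. cmod (cinner n (\<lambda>x. U $$ (x, i)) (\<lambda>x. W $$ (x, i))))"
    by (rule norm_sum)
  also have "\<dots> \<le> (\<Sum>i<n. col_norm W i)"
  proof (rule sum_mono)
    fix i assume "i \<in> {..<n}"
    then have "complex_of_real ((col_norm U i)\<^sup>2) = 1"
      using adjoint_mult_self_diag[OF U, of i] UU by simp
    then have "(col_norm U i)\<^sup>2 = 1"
      by (simp only: of_real_eq_1_iff)
    then have "col_norm U i = 1" using col_norm_nonneg[of U i] by (simp add: power2_eq_1_iff)
    then show "cmod (cinner n (\<lambda>x. U $$ (x, i)) (\<lambda>x. W $$ (x, i))) \<le> col_norm W i"
      using cmod_sum_cnj_mult_le[of "\<lambda>x. U $$ (x, i)" "\<lambda>x. W $$ (x, i)" n] U W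
      unfolding cinner_def col_norm_def by simp
  qed
  finally show ?thesis unfolding W_def .
qed

lemma sing_vals_eq_col_norms:
  fixes A :: "complex mat"
  assumes A: "A \<in> carrier_mat n n"
  obtains U where "U \<in> carrier_mat n n" "mat_adjoint U * U = 1\<^sub>m n"
    "mset (sing_vals A) = mset (map (col_norm (A * U)) [0..<n])"
proof -
  have "mat_adjoint A * A \<in> carrier_mat n n" by (rule mult_carrier_mat[OF mat_adjoint_carrier[OF A] A])
  from unitary_triangularization[OF this] obtain U where "U \<in> carrier_mat n n"
    "mat_adjoint U * U = 1\<^sub>m n" "upper_triangular (mat_adjoint U * (mat_adjoint A * A) * U)"
    by blast
  with mset_sing_vals_eq_col_norms[OF A] that show ?thesis by blast
qed

lemma sum_list_map_eq_sum_lessThan: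
  assumes "mset xs = mset (map g [0..<n])"
  shows "sum_list (map f xs) = (\<Sum>i<n. f (g i))"
proof -
  have "sum_list (map f xs) = sum_mset (mset (map f xs))" by (rule sum_mset_sum_list[symmetric])
  also have "mset (map f xs) = mset (map f (map g [0..<n]))" unfolding mset_map assms ..
  also have "sum_mset \<dots> = sum_list (map f (map g [0..<n]))" by (rule sum_mset_sum_list)
  also have "\<dots> = (\<Sum>i<n. f (g i))" by (simp add: sum_list_sum_nth atLeast0LessThan)
  finally show ?thesis .
qed

lemma length_sing_vals:
  assumes "A \<in> carrier_mat n n"
  shows "length (sing_vals A) = n"
proof -
  obtain U where "mset (sing_vals A) = mset (map (col_norm (A * U)) [0..<n])"
    using sing_vals_eq_col_norms[OF assms] by blast
  then have "size (mset (sing_vals A)) = n" by simp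
  then show ?thesis by simp
qed

lemma sing_vals_nonneg:
  assumes "A \<in> carrier_mat n n" "s \<in> set (sing_vals A)"
  shows "0 \<le> s"
proof -
  obtain U where "mset (sing_vals A) = mset (map (col_norm (A * U)) [0..<n])"
    using sing_vals_eq_col_norms[OF assms(1)] by blast
  then have "set (sing_vals A) = col_norm (A * U) ` {0..<n}"
    by (metis set_mset_mset set_map set_upt)
  with assms(2) show ?thesis by (auto simp: col_norm_nonneg)
qed

lemma sum_sq_sing_vals:
  assumes "A \<in> carrier_mat n n"
  shows "sum_list (map (\<lambda>s. s\<^sup>2) (sing_vals A)) = (\<Sum>x<n. \<Sum>y<n. (cmod (A $$ (x, y)))\<^sup>2)"
proof -
  obtain U where "U \<in> carrier_mat n n" "mat_adjoint U * U = 1\<^sub>m n"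
    and "mset (sing_vals A) = mset (map (col_norm (A * U)) [0..<n])"
    using sing_vals_eq_col_norms[OF assms] by blast
  moreover from this(3) have "sum_list (map (\<lambda>s. s\<^sup>2) (sing_vals A)) = (\<Sum>i<n. (col_norm (A * U) i)\<^sup>2)"
    by (rule sum_list_map_eq_sum_lessThan)
  ultimately show ?thesis using sum_col_norm_sq_unitary[OF assms] by simp
qed

lemma cmod_trace_le_sum_sing_vals:
  assumes "A \<in> carrier_mat n n"
  shows "cmod (\<Sum>x<n. A $$ (x, x)) \<le> sum_list (sing_vals A)"
proof -
  obtain U where "U \<in> carrier_mat n n" "mat_adjoint U * U = 1\<^sub>m n"
    and "mset (sing_vals A) = mset (map (col_norm (A * U)) [0..<n])"
    using sing_vals_eq_col_norms[OF assms] by blast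
  moreover from this(3) have "sum_list (map (\<lambda>s. s) (sing_vals A)) = (\<Sum>i<n. col_norm (A * U) i)"
    by (rule sum_list_map_eq_sum_lessThan)
  ultimately show ?thesis using cmod_trace_le_sum_col_norm[OF assms] by simp
qed

lemma schmidt_nonneg: "A \<in> carrier_mat d d \<Longrightarrow> 0 \<le> schmidt A j"
  unfolding schmidt_def by (auto intro: sing_vals_nonneg nth_mem)

lemma schmidt_eq_0: "A \<in> carrier_mat d d \<Longrightarrow> d < j \<Longrightarrow> schmidt A j = 0"
  unfolding schmidt_def by (simp add: length_sing_vals)

lemma sum_schmidt:
  assumes "A \<in> carrier_mat d d"
  shows "(\<Sum>j=1..d. f (schmidt A j)) = sum_list (map f (sing_vals A))"
proof -
  have "(\<Sum>j=1..d. f (schmidt A j)) = (\<Sum>i<d. f (sing_vals A ! i))"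
    using length_sing_vals[OF assms] by (simp add: sum.atLeast1_atMost_eq schmidt_def)
  also have "\<dots> = sum_list (map f (sing_vals A))"
    using length_sing_vals[OF assms] by (simp add: sum_list_sum_nth atLeast0LessThan)
  finally show ?thesis .
qed

lemma sum_lessThan_vanishing_tail:
  fixes h :: "nat \<Rightarrow> 'a::comm_monoid_add"
  assumes "k \<le> d" "\<And>i. k < i \<Longrightarrow> h i = 0" "k = d \<Longrightarrow> h k = 0"
  shows "(\<Sum>i<d. h i) = (\<Sum>i<k. h i) + h k"
proof (cases "k = d")
  case False
  with assms(1,2) have "(\<Sum>i<d. h i) = (\<Sum>i<Suc k. h i)"
    by (intro sum.mono_neutral_right) auto
  then show ?thesis by simp
qed (use assms(3) in simp)

lemma sum_schmidt_split:
  assumes A: "A \<in> carrier_mat d d" and "k \<le> d" and "f 0 = 0"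
    and tail: "\<And>j. k + 2 \<le> j \<Longrightarrow> j \<le> d \<Longrightarrow> schmidt A j = 0"
  shows "(\<Sum>j=1..d. f (schmidt A j)) = (\<Sum>j=1..k. f (schmidt A j)) + f (schmidt A (k + 1))"
proof -
  have vanish: "f (schmidt A (Suc i)) = 0" if "k < i \<or> d \<le> i" for i
  proof (cases "Suc i \<le> d")
    case True
    with that have "schmidt A (Suc i) = 0" by (intro tail) auto
    then show ?thesis using \<open>f 0 = 0\<close> by simp
  qed (simp add: schmidt_eq_0[OF A] \<open>f 0 = 0\<close>)
  have "(\<Sum>j=1..d. f (schmidt A j)) = (\<Sum>i<d. f (schmidt A (Suc i)))"
    by (simp add: sum.atLeast1_atMost_eq)
  also have "\<dots> = (\<Sum>i<k. f (schmidt A (Suc i))) + f (schmidt A (Suc k))"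
    using \<open>k \<le> d\<close> vanish by (intro sum_lessThan_vanishing_tail) auto
  finally show ?thesis by (simp add: sum.atLeast1_atMost_eq)
qed

section \<open>The upper bound\<close>

lemma qform_P_omega:
  "qform d (P_omega d) psi = complex_of_real ((cmod (\<Sum>i<d. psi $$ (i, i)))\<^sup>2 / real d)"
proof -
  define z where "z = (\<Sum>q\<in>tensor_idx d. cnj (omega d $$ q) * psi $$ q)"
  have om: "omega d $$ (i, j) = (if i = j then complex_of_real (1 / sqrt (real d)) else 0)"
    if "i < d" "j < d" for i j
    using that unfolding omega_def by simp
  have z: "z = complex_of_real (1 / sqrt (real d)) * (\<Sum>i<d. psi $$ (i, i))"
  proof -
    have "z = (\<Sum>i<d. \<Sum>j<d. cnj (omega d $$ (i, j)) * psi $$ (i, j))"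
      unfolding z_def tensor_idx_def by (simp add: sum.cartesian_product)
    also have "\<dots> = (\<Sum>i<d. complex_of_real (1 / sqrt (real d)) * psi $$ (i, i))"
      by (intro sum.cong refl) (simp add: om if_distrib[of "\<lambda>a. cnj a * _"] cong: if_cong)
    finally show ?thesis by (simp add: sum_distrib_left)
  qed
  have "qform d (P_omega d) psi
      = (\<Sum>p\<in>tensor_idx d. \<Sum>q\<in>tensor_idx d. (cnj (psi $$ p) * omega d $$ p) * (cnj (omega d $$ q) * psi $$ q))"
    unfolding qform_def P_omega_def by (intro sum.cong refl) (simp add: mult_ac)
  also have "\<dots> = cnj z * z"
    unfolding z_def sum_product[symmetric] cnj_sum by (simp add: mult.commute)
  also have "\<dots> = complex_of_real ((cmod z)\<^sup>2)"
    by (simp add: complex_norm_square mult.commute del: of_real_power)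
  also have "(cmod z)\<^sup>2 = (cmod (\<Sum>i<d. psi $$ (i, i)))\<^sup>2 / real d"
  proof -
    have "(cmod (complex_of_real (1 / sqrt (real d))))\<^sup>2 = 1 / real d"
      unfolding norm_of_real by (simp add: power_divide)
    then show ?thesis unfolding z norm_mult power_mult_distrib by simp
  qed
  finally show ?thesis .
qed

lemma sum_sq_le_card_mult_sum_sq:
  fixes a :: "'a \<Rightarrow> real"
  shows "(\<Sum>x\<in>I. a x)\<^sup>2 \<le> real (card I) * (\<Sum>x\<in>I. (a x)\<^sup>2)"
proof -
  have "\<bar>\<Sum>x\<in>I. a x\<bar> \<le> (\<Sum>x\<in>I. \<bar>a x\<bar> * \<bar>1\<bar>)" by (simp add: sum_abs)
  also have "\<dots> \<le> L2_set a I * L2_set (\<lambda>_. 1) I" by (rule L2_set_mult_ineq)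
  finally have "\<bar>\<Sum>x\<in>I. a x\<bar> \<le> sqrt (\<Sum>x\<in>I. (a x)\<^sup>2) * sqrt (real (card I))"
    by (simp add: L2_set_def)
  then have "\<bar>\<Sum>x\<in>I. a x\<bar>\<^sup>2 \<le> (sqrt (\<Sum>x\<in>I. (a x)\<^sup>2) * sqrt (real (card I)))\<^sup>2"
    by (rule power_mono) simp
  then show ?thesis by (simp add: power_mult_distrib sum_nonneg mult.commute)
qed

text \<open>The identity below writes the gap between \<open>(k + \<theta>)\<^sup>2 (S\<^sup>2 + k t\<^sup>2)\<close> and
  \<open>k (k + \<theta>\<^sup>2) (S + t)\<^sup>2\<close> as a product of two factors, both nonnegative once
  \<open>k t \<le> \<theta> S\<close> and \<open>\<theta> < 1\<close>.\<close>

lemma constrained_sum_sq_le: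
  fixes k \<theta> S t Q :: real
  assumes k: "k \<ge> 1" and \<theta>: "0 \<le> \<theta>" "\<theta> < 1" and "S \<ge> 0" "t \<ge> 0"
    and SQ: "S\<^sup>2 \<le> k * Q" and Qt: "Q + t\<^sup>2 = 1" and tS: "k * t \<le> \<theta> * S"
  shows "(S + t)\<^sup>2 \<le> (k + \<theta>)\<^sup>2 / (k + \<theta>\<^sup>2)"
proof -
  have iden: "k * (k + \<theta>\<^sup>2) * (S + t)\<^sup>2
      + (\<theta> * S - k * t) * ((2 * k + \<theta> - k * \<theta>) * S - k * (k + 2 * \<theta> - 1) * t)
      = (k + \<theta>)\<^sup>2 * (S\<^sup>2 + k * t\<^sup>2)"
    by (simp add: power2_eq_square algebra_simps)
  have f1: "\<theta> * S - k * t \<ge> 0" using tS by simp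
  have "k * (k + 2 * \<theta> - 1) * t \<le> (k + 2 * \<theta> - 1) * (\<theta> * S)"
    using tS k \<theta> by (simp add: mult.assoc mult.left_commute[of k] mult_left_mono)
  moreover have "(k + 2 * \<theta> - 1) * (\<theta> * S) \<le> (2 * k + \<theta> - k * \<theta>) * S"
  proof -
    have "(2 * k + \<theta> - k * \<theta>) - (k + 2 * \<theta> - 1) * \<theta> = 2 * (1 - \<theta>) * (k + \<theta>)"
      by (simp add: algebra_simps)
    also have "\<dots> \<ge> 0" using k \<theta> by simp
    finally show ?thesis using \<open>S \<ge> 0\<close> by (simp add: mult.assoc[symmetric] mult_right_mono)
  qed
  ultimately have f2: "(2 * k + \<theta> - k * \<theta>) * S - k * (k + 2 * \<theta> - 1) * t \<ge> 0" by linarith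
  have "k * (k + \<theta>\<^sup>2) * (S + t)\<^sup>2 \<le> (k + \<theta>)\<^sup>2 * (S\<^sup>2 + k * t\<^sup>2)"
    using iden mult_nonneg_nonneg[OF f1 f2] by linarith
  also have "\<dots> \<le> (k + \<theta>)\<^sup>2 * (k * Q + k * t\<^sup>2)"
    using SQ by (intro mult_left_mono) auto
  also have "k * Q + k * t\<^sup>2 = k"
    using Qt by (simp flip: distrib_left)
  finally have "(k + \<theta>\<^sup>2) * (S + t)\<^sup>2 \<le> (k + \<theta>)\<^sup>2"
    using k by (simp add: mult.assoc mult.commute[of k])
  moreover have "k + \<theta>\<^sup>2 > 0" using k by (simp add: add_pos_nonneg)
  ultimately show ?thesis by (simp add: field_simps)
qed

lemma floor_split_facts:
  fixes \<alpha> :: real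
  assumes "1 \<le> \<alpha>" "\<alpha> \<le> real d" "k = nat \<lfloor>\<alpha>\<rfloor>" "\<theta> = \<alpha> - real k"
  shows "1 \<le> k" "k \<le> d" "0 \<le> \<theta>" "\<theta> < 1" "\<theta> > 0 \<Longrightarrow> k < d"
    "nat \<lceil>\<alpha>\<rceil> = (if \<theta> > 0 then k + 1 else k)"
proof -
  have "\<lfloor>\<alpha>\<rfloor> \<ge> 1" using assms(1) by simp
  then have k: "real k = of_int \<lfloor>\<alpha>\<rfloor>" using assms(3) by simp
  show "1 \<le> k" using \<open>\<lfloor>\<alpha>\<rfloor> \<ge> 1\<close> assms(3) by (simp add: le_nat_iff)
  have "\<lfloor>\<alpha>\<rfloor> \<le> int d" using assms(2) by (simp add: floor_le_iff)
  then show "k \<le> d" using assms(3) by simp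
  show "0 \<le> \<theta>" using assms(4) k by simp
  show "\<theta> < 1" using assms(4) k by linarith
  show "\<theta> > 0 \<Longrightarrow> k < d" using assms(2,4) by simp
  show "nat \<lceil>\<alpha>\<rceil> = (if \<theta> > 0 then k + 1 else k)"
  proof (cases "\<theta> > 0")
    case True
    have "\<lceil>\<alpha>\<rceil> = int k + 1"
      by (rule ceiling_unique) (use True assms(4) k floor_correct[of \<alpha>] in auto)
    then show ?thesis using True by simp
  next
    case False
    then have "\<alpha> = real k" using assms(4) k by linarith
    then show ?thesis using False by simp
  qed
qed

lemma admissible_schmidt_constraints:
  fixes \<alpha> :: real
  assumes "1 \<le> \<alpha>" "\<alpha> \<le> real d" and k: "k = nat \<lfloor>\<alpha>\<rfloor>" and \<theta>: "\<theta> = \<alpha> - real k"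
    and adm: "admissible d \<alpha> psi" and A: "psi \<in> carrier_mat d d"
  shows "\<And>j. k + 2 \<le> j \<Longrightarrow> j \<le> d \<Longrightarrow> schmidt psi j = 0"
    and "real k * schmidt psi (k + 1) \<le> \<theta> * (\<Sum>j=1..k. schmidt psi j)"
proof -
  note fl = floor_split_facts[OF assms(1-4)]
  have beyond_ceiling: "schmidt psi j = 0" if "nat \<lceil>\<alpha>\<rceil> + 1 \<le> j" "j \<le> d" for j
    using adm that unfolding admissible_def Let_def k[symmetric] \<theta>[symmetric] by auto
  show "schmidt psi j = 0" if "k + 2 \<le> j" "j \<le> d" for j
    using beyond_ceiling[OF _ that(2)] that(1) fl(6) by (auto split: if_splits)
  show "real k * schmidt psi (k + 1) \<le> \<theta> * (\<Sum>j=1..k. schmidt psi j)"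
  proof (cases "\<theta> > 0")
    case True
    with adm have "schmidt psi (k + 1) \<le> \<theta> / real k * (\<Sum>j=1..k. schmidt psi j)"
      unfolding admissible_def Let_def k[symmetric] \<theta>[symmetric] by auto
    then show ?thesis using fl(1) by (simp add: field_simps)
  next
    case False
    then have "schmidt psi (k + 1) = 0"
      using beyond_ceiling[of "k + 1"] fl(6) schmidt_eq_0[OF A, of "k + 1"]
      by (cases "k + 1 \<le> d") auto
    with False fl(3) show ?thesis by simp
  qed
qed

lemma qform_P_omega_le:
  fixes \<alpha> :: real
  assumes "1 \<le> \<alpha>" "\<alpha> \<le> real d" and k: "k = nat \<lfloor>\<alpha>\<rfloor>" and \<theta>: "\<theta> = \<alpha> - real k"
    and "psi \<in> V_alpha d \<alpha>"
  shows "Re (qform d (P_omega d) psi) \<le> (real k + \<theta>)\<^sup>2 / (real d * (real k + \<theta>\<^sup>2))"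
proof -
  note fl = floor_split_facts[OF assms(1-4)]
  from \<open>psi \<in> V_alpha d \<alpha>\<close> have unit: "unit_vec d psi" and adm: "admissible d \<alpha> psi"
    unfolding V_alpha_def by auto
  then have A: "psi \<in> carrier_mat d d" unfolding unit_vec_def by auto
  note tail = admissible_schmidt_constraints(1)[OF assms(1-4) adm A]
  define S where "S = (\<Sum>j=1..k. schmidt psi j)"
  define Q where "Q = (\<Sum>j=1..k. (schmidt psi j)\<^sup>2)"
  define t where "t = schmidt psi (k + 1)"
  have "(\<Sum>x<d. \<Sum>y<d. (cmod (psi $$ (x, y)))\<^sup>2) = 1"
    using unit unfolding unit_vec_def tensor_idx_def by (simp add: sum.cartesian_product)
  then have "Q + t\<^sup>2 = 1"
    using sum_schmidt_split[OF A fl(2), of "\<lambda>s. s\<^sup>2"] tail sum_schmidt[OF A, of "\<lambda>s. s\<^sup>2"]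
      sum_sq_sing_vals[OF A]
    unfolding Q_def t_def by simp
  moreover have "S\<^sup>2 \<le> real k * Q"
    using sum_sq_le_card_mult_sum_sq[of "schmidt psi" "{1..k}"] unfolding S_def Q_def by simp
  moreover have "S \<ge> 0" "t \<ge> 0"
    unfolding S_def t_def by (simp_all add: sum_nonneg schmidt_nonneg[OF A])
  moreover have "real k * t \<le> \<theta> * S"
    unfolding S_def t_def by (rule admissible_schmidt_constraints(2)[OF assms(1-4) adm A])
  ultimately have bound: "(S + t)\<^sup>2 \<le> (real k + \<theta>)\<^sup>2 / (real k + \<theta>\<^sup>2)"
    using fl by (intro constrained_sum_sq_le) auto
  have "cmod (\<Sum>x<d. psi $$ (x, x)) \<le> S + t"
    using sum_schmidt_split[OF A fl(2), of "\<lambda>s. s"] tail sum_schmidt[OF A, of "\<lambda>s. s"]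
      cmod_trace_le_sum_sing_vals[OF A]
    unfolding S_def t_def by simp
  then have "(cmod (\<Sum>x<d. psi $$ (x, x)))\<^sup>2 \<le> (S + t)\<^sup>2"
    by (rule power_mono) simp
  with bound have "(cmod (\<Sum>x<d. psi $$ (x, x)))\<^sup>2 / real d \<le> (real k + \<theta>)\<^sup>2 / (real k + \<theta>\<^sup>2) / real d"
    by (intro divide_right_mono) auto
  then show ?thesis by (simp add: qform_P_omega field_simps)
qed

section \<open>The maximiser\<close>

definition diagonal_tensor :: "nat \<Rightarrow> (nat \<Rightarrow> real) \<Rightarrow> complex mat" where
  "diagonal_tensor d g = mat d d (\<lambda>(i, j). if i = j then complex_of_real (g i) else 0)"

lemma diagonal_tensor_carrier: "diagonal_tensor d g \<in> carrier_mat d d"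
  unfolding diagonal_tensor_def by simp

lemma mat_adjoint_one: "mat_adjoint (1\<^sub>m n :: complex mat) = 1\<^sub>m n"
  by (rule eq_matI) auto

lemma upper_triangular_adjoint_mult_diagonal_tensor:
  "upper_triangular (mat_adjoint (diagonal_tensor d g) * diagonal_tensor d g)"
proof (rule upper_triangularI)
  define A where "A = diagonal_tensor d g"
  have A: "A \<in> carrier_mat d d" unfolding A_def by (rule diagonal_tensor_carrier)
  fix i j assume "j < i" "i < dim_row (mat_adjoint (diagonal_tensor d g) * diagonal_tensor d g)"
  then have "i < d" "j < d" using A by (auto simp: A_def)
  then have "(mat_adjoint A * A) $$ (i, j) = (\<Sum>x<d. mat_adjoint A $$ (i, x) * A $$ (x, j))"
    by (rule index_mult_mat_sum[OF mat_adjoint_carrier[OF A] A])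
  also have "\<dots> = 0"
    using \<open>j < i\<close> \<open>i < d\<close> \<open>j < d\<close> by (intro sum.neutral) (auto simp: A_def diagonal_tensor_def)
  finally show "(mat_adjoint (diagonal_tensor d g) * diagonal_tensor d g) $$ (i, j) = 0"
    unfolding A_def .
qed

lemma col_norm_diagonal_tensor:
  assumes "i < d" "0 \<le> g i"
  shows "col_norm (diagonal_tensor d g) i = g i"
proof -
  have "(\<Sum>x<d. (cmod (diagonal_tensor d g $$ (x, i)))\<^sup>2) = (\<Sum>x<d. if x = i then (g i)\<^sup>2 else 0)"
    using assms(1) by (intro sum.cong refl) (auto simp: diagonal_tensor_def)
  then show ?thesis using assms unfolding col_norm_def by (simp add: diagonal_tensor_def)
qed

lemma sing_vals_diagonal_tensor:
  assumes nonneg: "\<And>i. 0 \<le> g i" and antimono: "\<And>i j. i \<le> j \<Longrightarrow> g j \<le> g i"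
  shows "sing_vals (diagonal_tensor d g) = map g [0..<d]"
proof -
  define A where "A = diagonal_tensor d g"
  have A: "A \<in> carrier_mat d d" unfolding A_def by (rule diagonal_tensor_carrier)
  have H: "mat_adjoint A * A \<in> carrier_mat d d" by (rule mult_carrier_mat[OF mat_adjoint_carrier[OF A] A])
  have "mset (sing_vals A) = mset (map (col_norm (A * 1\<^sub>m d)) [0..<d])"
    using H upper_triangular_adjoint_mult_diagonal_tensor[of d g, folded A_def]
    by (intro mset_sing_vals_eq_col_norms[OF A])
      (simp_all add: mat_adjoint_one left_mult_one_mat[OF H] right_mult_one_mat[OF H])
  also have "map (col_norm (A * 1\<^sub>m d)) [0..<d] = map g [0..<d]"
    unfolding right_mult_one_mat[OF A] unfolding A_def using nonneg by (simp add: col_norm_diagonal_tensor)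
  finally have mset_eq: "mset (sing_vals A) = mset (map g [0..<d])" .
  have "sorted (rev (map g [0..<d]))"
    unfolding sorted_rev_iff_nth_mono using antimono by simp
  then have sort_eq: "sort (map g [0..<d]) = rev (map g [0..<d])"
    by (intro properties_for_sort) simp_all
  have "sing_vals A = rev (sorted_list_of_multiset (mset (sing_vals A)))"
    by (simp add: sing_vals_def)
  also have "\<dots> = map g [0..<d]"
    unfolding mset_eq sorted_list_of_multiset_mset sort_eq by simp
  finally show ?thesis unfolding A_def .
qed

lemma schmidt_diagonal_tensor:
  assumes "\<And>i. 0 \<le> g i" "\<And>i j. i \<le> j \<Longrightarrow> g j \<le> g i" "1 \<le> j" "j \<le> d"
  shows "schmidt (diagonal_tensor d g) j = g (j - 1)"
proof -
  have "sing_vals (diagonal_tensor d g) = map g [0..<d]"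
    by (rule sing_vals_diagonal_tensor[OF assms(1,2)])
  then show ?thesis using assms(3,4) unfolding schmidt_def by simp
qed

lemma unit_vec_diagonal_tensor: "unit_vec d (diagonal_tensor d g) \<longleftrightarrow> (\<Sum>i<d. (g i)\<^sup>2) = 1"
proof -
  have "(\<Sum>p\<in>tensor_idx d. (cmod (diagonal_tensor d g $$ p))\<^sup>2)
      = (\<Sum>x<d. \<Sum>y<d. (cmod (diagonal_tensor d g $$ (x, y)))\<^sup>2)"
    unfolding tensor_idx_def by (simp add: sum.cartesian_product)
  also have "\<dots> = (\<Sum>x<d. \<Sum>y<d. if x = y then (g x)\<^sup>2 else 0)"
    by (intro sum.cong refl) (auto simp: diagonal_tensor_def)
  finally show ?thesis unfolding unit_vec_def using diagonal_tensor_carrier by simp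
qed

lemma qform_P_omega_diagonal_tensor:
  assumes "\<And>i. 0 \<le> g i"
  shows "qform d (P_omega d) (diagonal_tensor d g) = complex_of_real ((\<Sum>i<d. g i)\<^sup>2 / real d)"
proof -
  have trace: "(\<Sum>i<d. diagonal_tensor d g $$ (i, i)) = complex_of_real (\<Sum>i<d. g i)"
    by (simp add: diagonal_tensor_def)
  show ?thesis unfolding qform_P_omega trace norm_of_real using assms by (simp add: sum_nonneg)
qed

definition optimal_profile :: "nat \<Rightarrow> real \<Rightarrow> nat \<Rightarrow> real" where
  "optimal_profile k \<theta> i = (if i < k then 1 else if i = k then \<theta> else 0) / sqrt (real k + \<theta>\<^sup>2)"

lemma optimal_profile_nonneg: "0 \<le> \<theta> \<Longrightarrow> 0 \<le> optimal_profile k \<theta> i"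
  unfolding optimal_profile_def by simp

lemma optimal_profile_antimono:
  "0 \<le> \<theta> \<Longrightarrow> \<theta> \<le> 1 \<Longrightarrow> i \<le> j \<Longrightarrow> optimal_profile k \<theta> j \<le> optimal_profile k \<theta> i"
  unfolding optimal_profile_def by (auto intro: divide_right_mono)

lemma optimal_profile_sums:
  assumes "1 \<le> k" "k \<le> d" "0 \<le> \<theta>" "k = d \<Longrightarrow> \<theta> = 0"
  shows "(\<Sum>i<d. (optimal_profile k \<theta> i)\<^sup>2) = 1"
    and "(\<Sum>i<d. optimal_profile k \<theta> i)\<^sup>2 = (real k + \<theta>)\<^sup>2 / (real k + \<theta>\<^sup>2)"
proof -
  define c where "c = 1 / sqrt (real k + \<theta>\<^sup>2)"
  have pos: "real k + \<theta>\<^sup>2 > 0" using assms(1) by (simp add: add_pos_nonneg)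
  then have c2: "c\<^sup>2 = 1 / (real k + \<theta>\<^sup>2)" unfolding c_def by (simp add: power_divide)
  have g: "optimal_profile k \<theta> i = (if i < k then c else if i = k then c * \<theta> else 0)" for i
    unfolding c_def optimal_profile_def by simp
  have last: "optimal_profile k \<theta> k = 0" if "k = d"
    using assms(4) that g by auto
  have "(\<Sum>i<d. (optimal_profile k \<theta> i)\<^sup>2) = c\<^sup>2 * (real k + \<theta>\<^sup>2)"
    using sum_lessThan_vanishing_tail[OF assms(2), of "\<lambda>i. (optimal_profile k \<theta> i)\<^sup>2"] last
    by (simp add: g power_mult_distrib algebra_simps)
  then show "(\<Sum>i<d. (optimal_profile k \<theta> i)\<^sup>2) = 1"
    using pos by (simp add: c2)
  have "(\<Sum>i<d. optimal_profile k \<theta> i) = c * (real k + \<theta>)"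
    using sum_lessThan_vanishing_tail[OF assms(2), of "optimal_profile k \<theta>"] last
    by (simp add: g algebra_simps)
  then show "(\<Sum>i<d. optimal_profile k \<theta> i)\<^sup>2 = (real k + \<theta>)\<^sup>2 / (real k + \<theta>\<^sup>2)"
    by (simp add: power_mult_distrib c2)
qed

lemma schmidt_optimal_profile:
  assumes "0 \<le> \<theta>" "\<theta> \<le> 1" "1 \<le> j" "j \<le> d"
  shows "schmidt (diagonal_tensor d (optimal_profile k \<theta>)) j = optimal_profile k \<theta> (j - 1)"
  using assms by (intro schmidt_diagonal_tensor optimal_profile_nonneg optimal_profile_antimono) auto

lemma optimal_profile_admissible:
  fixes \<alpha> :: real
  assumes "1 \<le> \<alpha>" "\<alpha> \<le> real d" and k: "k = nat \<lfloor>\<alpha>\<rfloor>" and \<theta>: "\<theta> = \<alpha> - real k"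
  shows "admissible d \<alpha> (diagonal_tensor d (optimal_profile k \<theta>))"
proof -
  note fl = floor_split_facts[OF assms]
  let ?s = "schmidt (diagonal_tensor d (optimal_profile k \<theta>))"
  have "?s j = 0" if "nat \<lceil>\<alpha>\<rceil> + 1 \<le> j" "j \<le> d" for j
    using fl(3,4,6) that by (auto simp: schmidt_optimal_profile optimal_profile_def split: if_splits)
  moreover have "?s (k + 1) \<le> \<theta> / real k * (\<Sum>j=1..k. ?s j)" if "\<theta> > 0"
  proof -
    have "(\<Sum>j=1..k. ?s j) = (\<Sum>j=1..k. 1 / sqrt (real k + \<theta>\<^sup>2))"
      using fl(2,3,4) by (intro sum.cong refl) (auto simp: schmidt_optimal_profile optimal_profile_def)
    then show ?thesis
      using fl(1,3,4,5) that by (simp add: schmidt_optimal_profile optimal_profile_def)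
  qed
  ultimately show ?thesis
    unfolding admissible_def Let_def k[symmetric] \<theta>[symmetric] by blast
qed

lemma optimal_profile_maximizer:
  fixes \<alpha> :: real
  assumes "1 \<le> \<alpha>" "\<alpha> \<le> real d" and k: "k = nat \<lfloor>\<alpha>\<rfloor>" and \<theta>: "\<theta> = \<alpha> - real k"
  shows "diagonal_tensor d (optimal_profile k \<theta>) \<in> V_alpha d \<alpha>"
    and "qform d (P_omega d) (diagonal_tensor d (optimal_profile k \<theta>))
      = complex_of_real ((real k + \<theta>)\<^sup>2 / (real d * (real k + \<theta>\<^sup>2)))"
proof -
  note fl = floor_split_facts[OF assms]
  have "k = d \<Longrightarrow> \<theta> = 0" using fl(3,5) by fastforce
  note sums = optimal_profile_sums[OF fl(1,2,3) this]
  show "diagonal_tensor d (optimal_profile k \<theta>) \<in> V_alpha d \<alpha>"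
    using sums(1) optimal_profile_admissible[OF assms] by (simp add: V_alpha_def unit_vec_diagonal_tensor)
  have "qform d (P_omega d) (diagonal_tensor d (optimal_profile k \<theta>))
      = complex_of_real ((\<Sum>i<d. optimal_profile k \<theta> i)\<^sup>2 / real d)"
    by (rule qform_P_omega_diagonal_tensor[OF optimal_profile_nonneg[OF fl(3)]])
  also have "(\<Sum>i<d. optimal_profile k \<theta> i)\<^sup>2 / real d = (real k + \<theta>)\<^sup>2 / (real d * (real k + \<theta>\<^sup>2))"
    using sums(2) by simp
  finally show "qform d (P_omega d) (diagonal_tensor d (optimal_profile k \<theta>))
      = complex_of_real ((real k + \<theta>)\<^sup>2 / (real d * (real k + \<theta>\<^sup>2)))" .
qed

theorem lemma4p5:
  fixes d :: nat and \<alpha> :: real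
  assumes "d \<ge> 2" and "1 \<le> \<alpha>" and "\<alpha> \<le> real d"
  defines "k \<equiv> nat \<lfloor>\<alpha>\<rfloor>"
  defines "\<theta> \<equiv> \<alpha> - real k"
  shows "mu_alpha d \<alpha> (P_omega d) = (real k + \<theta>)\<^sup>2 / (real d * (real k + \<theta>\<^sup>2))
    \<and> (\<exists>psi\<in>V_alpha d \<alpha>.
          qform d (P_omega d) psi = complex_of_real (mu_alpha d \<alpha> (P_omega d))
        \<and> (\<forall>j\<in>{1..k}. schmidt psi j = 1 / sqrt (real k + \<theta>\<^sup>2))
        \<and> (k + 1 \<le> d \<longrightarrow> schmidt psi (k + 1) = \<theta> / sqrt (real k + \<theta>\<^sup>2))
        \<and> (\<forall>j. k + 2 \<le> j \<and> j \<le> d \<longrightarrow> schmidt psi j = 0))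
    \<and> (\<alpha> = real d \<longrightarrow> omega d \<in> V_alpha d \<alpha>
        \<and> qform d (P_omega d) (omega d) = complex_of_real (mu_alpha d \<alpha> (P_omega d)))"
proof -
  have k: "k = nat \<lfloor>\<alpha>\<rfloor>" and \<theta>: "\<theta> = \<alpha> - real k" by (simp_all add: k_def \<theta>_def)
  note fl = floor_split_facts[OF assms(2,3) k \<theta>]
  define psi where "psi = diagonal_tensor d (optimal_profile k \<theta>)"
  note opt = optimal_profile_maximizer[OF assms(2,3) k \<theta>, folded psi_def]
  have mu: "mu_alpha d \<alpha> (P_omega d) = (real k + \<theta>)\<^sup>2 / (real d * (real k + \<theta>\<^sup>2))"
    unfolding mu_alpha_def using opt qform_P_omega_le[OF assms(2,3) k \<theta>]
    by (intro cSup_eq_maximum) (force, auto)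
  have "schmidt psi j = optimal_profile k \<theta> (j - 1)" if "1 \<le> j" "j \<le> d" for j
    unfolding psi_def using fl(3,4) that by (intro schmidt_optimal_profile) auto
  moreover have "omega d = psi" if "\<alpha> = real d"
    using that unfolding k \<theta> psi_def omega_def diagonal_tensor_def optimal_profile_def
    by (intro eq_matI) auto
  ultimately show ?thesis
    using mu opt fl(2) by (auto intro!: bexI[of _ psi] simp: optimal_profile_def)
qed

end
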